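(* Let $D$ be an integral domain with an identity element and let $\varphi$ be the canonical homomorphism of $D_{mult}$ onto $D'=D_{mult}/\sim$. For every ideal $I$ of $D_{mult}$, $\varphi(\mathrm{Sep}\,I)=\mathrm{Sep}(\varphi(I))$.
   Context: $D_{mult}$ is the multiplicative semigroup of $D$ and $\sim$ the associate congruence. For a subset $A$ of a semigroup $S$: $\mathrm{Id}\,A=\{x\in S: xA\subseteq A,\ Ax\subseteq A\}$ and $\mathrm{Sep}\,A=\mathrm{Id}\,A\cap\mathrm{Id}(S\setminus A)$; $\mathrm{Sep}\,I$ is taken in $D_{mult}$, and $\mathrm{Sep}(\varphi(I))$ in $D'$. *)

theory Defs
  imports Main
begin

definition sg_Id :: "'s set \<Rightarrow> ('s \<Rightarrow> 's \<Rightarrow> 's) \<Rightarrow> 's set \<Rightarrow> 's set" where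
  "sg_Id S m A = {x \<in> S. (\<forall>a\<in>A. m x a \<in> A) \<and> (\<forall>a\<in>A. m a x \<in> A)}"

definition sg_Sep :: "'s set \<Rightarrow> ('s \<Rightarrow> 's \<Rightarrow> 's) \<Rightarrow> 's set \<Rightarrow> 's set" where
  "sg_Sep S m A = sg_Id S m A \<inter> sg_Id S m (S - A)"

definition sg_ideal :: "'s set \<Rightarrow> ('s \<Rightarrow> 's \<Rightarrow> 's) \<Rightarrow> 's set \<Rightarrow> bool" where
  "sg_ideal S m I \<longleftrightarrow> I \<subseteq> S \<and> I \<noteq> {} \<and> (\<forall>s\<in>S. \<forall>a\<in>I. m s a \<in> I \<and> m a s \<in> I)"

definition associated :: "'a::idom \<Rightarrow> 'a \<Rightarrow> bool" where
  "associated a b \<longleftrightarrow> a dvd b \<and> b dvd a"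

definition assoc_class :: "'a::idom \<Rightarrow> 'a set" where
  "assoc_class a = {b. associated a b}"

definition Dquot :: "'a::idom set set" where
  "Dquot = range assoc_class"

definition Dquot_mult :: "'a::idom set \<Rightarrow> 'a set \<Rightarrow> 'a set" where
  "Dquot_mult X Y = assoc_class ((SOME x. x \<in> X) * (SOME y. y \<in> Y))"

end

theory Submission
  imports Defs
begin

text \<open>A surjective homomorphism \<open>f\<close> maps \<open>Sep I\<close> onto \<open>Sep (f I)\<close> as soon as \<open>I\<close> is a union
  of fibres of \<open>f\<close>: then \<open>f\<close> also maps the complement of \<open>I\<close> onto the complement of \<open>f I\<close>, and
  membership of a product in \<open>I\<close> can be read off in the image. An ideal of \<open>D\<^sub>m\<^sub>u\<^sub>l\<^sub>t\<close> is closed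
  under taking multiples, hence a union of associate classes.\<close>

lemma sg_Id_image_saturated:
  assumes surj: "f ` S = T"
    and closed: "\<And>x y. x \<in> S \<Longrightarrow> y \<in> S \<Longrightarrow> m x y \<in> S"
    and hom: "\<And>x y. x \<in> S \<Longrightarrow> y \<in> S \<Longrightarrow> f (m x y) = m' (f x) (f y)"
    and sub: "A \<subseteq> S"
    and saturated: "\<And>a. a \<in> S \<Longrightarrow> f a \<in> f ` A \<longleftrightarrow> a \<in> A"
    and x: "x \<in> S"
  shows "f x \<in> sg_Id T m' (f ` A) \<longleftrightarrow> x \<in> sg_Id S m A"
proof -
  have "m' (f x) (f a) \<in> f ` A \<longleftrightarrow> m x a \<in> A" "m' (f a) (f x) \<in> f ` A \<longleftrightarrow> m a x \<in> A"
    if "a \<in> A" for a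
  proof -
    have "a \<in> S"
      using that sub by blast
    then show "m' (f x) (f a) \<in> f ` A \<longleftrightarrow> m x a \<in> A" "m' (f a) (f x) \<in> f ` A \<longleftrightarrow> m a x \<in> A"
      using x by (simp_all add: hom[symmetric] closed saturated)
  qed
  moreover have "f x \<in> T"
    using x surj by blast
  ultimately show ?thesis
    using x by (auto simp: sg_Id_def)
qed

lemma sg_Sep_image_saturated:
  assumes surj: "f ` S = T"
    and closed: "\<And>x y. x \<in> S \<Longrightarrow> y \<in> S \<Longrightarrow> m x y \<in> S"
    and hom: "\<And>x y. x \<in> S \<Longrightarrow> y \<in> S \<Longrightarrow> f (m x y) = m' (f x) (f y)"
    and sub: "I \<subseteq> S"
    and saturated: "\<And>a. a \<in> S \<Longrightarrow> f a \<in> f ` I \<Longrightarrow> a \<in> I"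
  shows "f ` sg_Sep S m I = sg_Sep T m' (f ` I)"
proof -
  have I_saturated: "f a \<in> f ` I \<longleftrightarrow> a \<in> I" if "a \<in> S" for a
    using saturated that by blast
  have compl_saturated: "f a \<in> f ` (S - I) \<longleftrightarrow> a \<in> S - I" if "a \<in> S" for a
    using saturated that by (metis DiffE DiffI image_eqI imageE)
  have compl: "T - f ` I = f ` (S - I)"
    using surj sub saturated by auto
  have sep_iff: "f x \<in> sg_Sep T m' (f ` I) \<longleftrightarrow> x \<in> sg_Sep S m I" if x: "x \<in> S" for x
  proof -
    have "f x \<in> sg_Sep T m' (f ` I) \<longleftrightarrow>
        f x \<in> sg_Id T m' (f ` I) \<and> f x \<in> sg_Id T m' (f ` (S - I))"
      by (simp add: sg_Sep_def compl)
    also have "\<dots> \<longleftrightarrow> x \<in> sg_Id S m I \<and> x \<in> sg_Id S m (S - I)"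
      using sg_Id_image_saturated[of f S T m m' I, OF surj closed hom sub I_saturated x]
        sg_Id_image_saturated[of f S T m m' "S - I", OF surj closed hom Diff_subset compl_saturated x]
      by simp
    finally show ?thesis
      by (simp add: sg_Sep_def)
  qed
  show ?thesis
  proof
    show "f ` sg_Sep S m I \<subseteq> sg_Sep T m' (f ` I)"
    proof
      fix X assume "X \<in> f ` sg_Sep S m I"
      then obtain x where "x \<in> sg_Sep S m I" "X = f x"
        by blast
      moreover have "x \<in> S"
        using \<open>x \<in> sg_Sep S m I\<close> by (simp add: sg_Sep_def sg_Id_def)
      ultimately show "X \<in> sg_Sep T m' (f ` I)"
        using sep_iff by simp
    qed
    show "sg_Sep T m' (f ` I) \<subseteq> f ` sg_Sep S m I"
    proof
      fix X assume X: "X \<in> sg_Sep T m' (f ` I)"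
      then have "X \<in> T"
        by (simp add: sg_Sep_def sg_Id_def)
      then obtain x where "x \<in> S" "X = f x"
        using surj by blast
      with X sep_iff show "X \<in> f ` sg_Sep S m I"
        by auto
    qed
  qed
qed

lemma sg_ideal_dvd_closed:
  fixes I :: "'a::comm_monoid_mult set"
  assumes "sg_ideal UNIV (*) I" "a \<in> I" "a dvd b"
  shows "b \<in> I"
  using assms unfolding sg_ideal_def by (auto elim!: dvdE)

lemma assoc_class_eq_iff: "assoc_class a = assoc_class b \<longleftrightarrow> associated a b"
  unfolding assoc_class_def associated_def set_eq_iff
  by (metis dvd_refl dvd_trans mem_Collect_eq)

lemma associated_some_assoc_class: "associated a (SOME x. x \<in> assoc_class a)"
proof -
  have "a \<in> assoc_class a"
    by (simp add: assoc_class_def associated_def)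
  then have "(SOME x. x \<in> assoc_class a) \<in> assoc_class a"
    by (rule someI)
  then show ?thesis
    by (simp add: assoc_class_def)
qed

lemma Dquot_mult_assoc_class:
  "Dquot_mult (assoc_class a) (assoc_class b) = assoc_class (a * b)"
proof -
  have "associated a (SOME x. x \<in> assoc_class a)" "associated b (SOME y. y \<in> assoc_class b)"
    by (rule associated_some_assoc_class)+
  then show ?thesis
    unfolding Dquot_mult_def assoc_class_eq_iff associated_def by (auto intro: mult_dvd_mono)
qed

theorem lemma4:
  fixes I :: "'a::idom set"
  assumes "sg_ideal UNIV (*) I"
  shows "assoc_class ` (sg_Sep UNIV (*) I) = sg_Sep Dquot Dquot_mult (assoc_class ` I)"
proof (rule sg_Sep_image_saturated)
  show "assoc_class ` UNIV = Dquot"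
    by (simp add: Dquot_def)
  show "assoc_class (x * y) = Dquot_mult (assoc_class x) (assoc_class y)" for x y :: 'a
    by (simp add: Dquot_mult_assoc_class)
  show "a \<in> I" if "assoc_class a \<in> assoc_class ` I" for a
  proof -
    from that obtain b where "b \<in> I" "associated b a"
      by (auto simp: assoc_class_eq_iff associated_def)
    then show ?thesis
      using sg_ideal_dvd_closed[OF assms] by (auto simp: associated_def)
  qed
qed auto

end
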